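(* Let $n\ge1$, $a,\omega,\varphi\in\mathbb{R}^n$, $b\in\mathbb{R}$, and $h(x)=\sin\Big(\sum_{i=1}^n a_i\sin(\omega_ix+\varphi_i)+b\Big)$. For $\mathbf{k}\in\mathbb{Z}^n$ let $\alpha_{\mathbf{k}}(a)=\prod_{i=1}^n J_{k_i}(a_i)$, $\langle \mathbf{k},\omega\rangle=\sum_i k_i\omega_i$, $\langle \mathbf{k},\varphi\rangle=\sum_i k_i\varphi_i$. Then for every $x\in\mathbb{R}$, $$h(x)=\sum_{\mathbf{k}\in\mathbb{Z}^n}A_{\mathbf{k}}\cos\big(\langle\mathbf{k},\omega\rangle x\big)+B_{\mathbf{k}}\sin\big(\langle\mathbf{k},\omega\rangle x\big),$$ with $A_{\mathbf{k}}=\alpha_{\mathbf{k}}(a)\sin(\langle\mathbf{k},\varphi\rangle+b)$ and $B_{\mathbf{k}}=\alpha_{\mathbf{k}}(a)\cos(\langle\mathbf{k},\varphi\rangle+b)$. Moreover, $$h(x)=\sum_{\mathbf{k}\in\mathbb{Z}^n}c_{\mathbf{k}}\,e^{i\langle\mathbf{k},\omega\rangle x},\qquad c_{\mathbf{k}}=-\,i\,\alpha_{\mathbf{k}}(a)\,e^{i\langle\mathbf{k},\varphi\rangle}\left(\frac{e^{ib}-(-1)^{\sum_j k_j}e^{-ib}}{2}\right).$$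
   Context: $J_k$ denotes the Bessel function of the first kind of integer order $k$; $i$ in the exponential form is the imaginary unit. *)

theory Defs
  imports "HOL-Analysis.Analysis"
begin

definition bessel_J_nat :: "nat \<Rightarrow> real \<Rightarrow> real" where
  "bessel_J_nat k x = (\<Sum>m. (-1) ^ m / (fact m * fact (m + k)) * (x / 2) ^ (2 * m + k))"

definition bessel_J :: "int \<Rightarrow> real \<Rightarrow> real" where
  "bessel_J k x = (if 0 \<le> k then bessel_J_nat (nat k) x
                   else (-1) ^ nat (- k) * bessel_J_nat (nat (- k)) x)"

end

theory Submission
  imports Defs
begin

text \<open>
  The Jacobi-Anger expansion exp (i x sin t) = sum_k J_k(x) exp (i k t) follows from the
  generating function exp (x/2 (t - 1/t)) = sum_k J_k(x) t^k, the Cauchy product of the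
  exponential series of x t / 2 and - x / (2 t) regrouped by the exponent of t.
  All series involved converge absolutely, so the expansions for the angles
  theta_i = omega_i x + phi_i can be multiplied: exp (i S) = sum_k alpha_k(a) exp (i <k, theta>)
  with S = sum_i a_i sin theta_i. The real expansion is the imaginary part of exp (i b) times
  this series. For the complex one, sin (S + b) = (exp (i (S + b)) - exp (- i (S + b))) / 2i,
  and the series of exp (- i S) is obtained by conjugation and the substitution k := - k,
  which by J_(-k) = (-1)^k J_k multiplies alpha_k(a) by (-1)^(k_1 + ... + k_n).
\<close>

lemma exp_has_sum:
  fixes z :: "'a::{real_normed_field,banach}"
  shows "((\<lambda>n. z ^ n / fact n) has_sum exp z) UNIV"
proof (rule norm_summable_imp_has_sum)
  show "summable (\<lambda>n. norm (z ^ n / fact n))"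
    using summable_exp[of "norm z"]
    by (simp add: norm_mult norm_inverse norm_power norm_fact divide_inverse mult.commute)
  show "(\<lambda>n. z ^ n / fact n) sums exp z"
    using exp_converges[of z] by (simp add: scaleR_conv_of_real divide_inverse mult.commute)
qed

lemma has_sum_product_complex:
  fixes f :: "'a \<Rightarrow> complex" and g :: "'b \<Rightarrow> complex"
  assumes "countable A" "countable B" "(f has_sum s) A" "(g has_sum t) B"
  shows "((\<lambda>(x, y). f x * g y) has_sum s * t) (A \<times> B)"
proof (rule has_sum_SigmaI)
  have "Infinite_Set_Sum.abs_summable_on f A" "Infinite_Set_Sum.abs_summable_on g B"
    using assms(3,4) abs_summable_equivalent summable_on_iff_abs_summable_on_complex
    by (blast dest: has_sum_imp_summable)+
  then have "Infinite_Set_Sum.abs_summable_on (\<lambda>(x, y). f x * g y) (A \<times> B)"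
    by (rule abs_summable_on_product[OF assms(1,2)])
  then show "(\<lambda>(x, y). f x * g y) summable_on A \<times> B"
    using abs_summable_equivalent abs_summable_summable by blast
  show "((\<lambda>y. case (x, y) of (x, y) \<Rightarrow> f x * g y) has_sum f x * t) B" for x
    using has_sum_cmult_right[OF assms(4)] by simp
  show "((\<lambda>x. f x * t) has_sum s * t) A"
    using has_sum_cmult_left[OF assms(3)] by simp
qed

lemma has_sum_prod_vec_complex:
  fixes f :: "'n::finite \<Rightarrow> 'b \<Rightarrow> complex"
  assumes "countable (UNIV :: 'b set)" and "\<And>i. (f i has_sum s i) UNIV"
  shows "((\<lambda>k::'b ^ 'n. \<Prod>i\<in>UNIV. f i (k $ i)) has_sum (\<Prod>i\<in>UNIV. s i)) UNIV"
proof -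
  have abs: "Infinite_Set_Sum.abs_summable_on (f i) UNIV" for i
    using assms(2) abs_summable_equivalent summable_on_iff_abs_summable_on_complex
    by (blast dest: has_sum_imp_summable)
  have "Infinite_Set_Sum.abs_summable_on (\<lambda>g. \<Prod>i\<in>UNIV. f i (g i)) (PiE UNIV (\<lambda>_. UNIV))"
    using abs assms(1) by (intro abs_summable_on_prod_PiE) auto
  then have summable: "(\<lambda>g. \<Prod>i\<in>UNIV. f i (g i)) summable_on UNIV"
    using abs_summable_equivalent abs_summable_summable by fastforce
  have "infsum (f i) UNIV = s i" for i
    using assms(2) by (rule infsumI)
  then have "infsum (\<lambda>g. \<Prod>i\<in>UNIV. f i (g i)) UNIV = (\<Prod>i\<in>UNIV. s i)"
    using infsum_prod_PiE_abs[of UNIV f "\<lambda>_. UNIV"] abs by (simp add: abs_summable_equivalent)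
  then have "((\<lambda>g. \<Prod>i\<in>UNIV. f i (g i)) has_sum (\<Prod>i\<in>UNIV. s i)) UNIV"
    using summable by (metis has_sum_infsum)
  moreover have "bij_betw vec_nth (UNIV :: ('b ^ 'n) set) UNIV"
    by (rule bij_betwI[where g = vec_lambda]) auto
  ultimately show ?thesis
    using has_sum_reindex_bij_betw[of vec_nth UNIV UNIV "\<lambda>g. \<Prod>i\<in>UNIV. f i (g i)"] by simp
qed

lemma bessel_J_nat_has_sum:
  "((\<lambda>m. (-1) ^ m / (fact m * fact (m + k)) * (x / 2) ^ (2 * m + k)) has_sum bessel_J_nat k x) UNIV"
proof (rule norm_summable_imp_has_sum)
  let ?c = "\<lambda>m. (-1) ^ m / (fact m * fact (m + k)) * (x / 2) ^ (2 * m + k) :: real"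
  have bound: "norm (?c m) \<le> \<bar>x / 2\<bar> ^ k * (inverse (fact m) * (\<bar>x / 2\<bar> ^ 2) ^ m)" for m
  proof -
    have "norm (?c m) = \<bar>x / 2\<bar> ^ k * (\<bar>x / 2\<bar> ^ 2) ^ m / (fact m * fact (m + k))"
      by (simp add: abs_mult power_abs power_add power_mult abs_divide)
    also have "\<dots> \<le> \<bar>x / 2\<bar> ^ k * (\<bar>x / 2\<bar> ^ 2) ^ m / (fact m * 1)"
      by (intro divide_left_mono mult_left_mono) auto
    also have "\<dots> = \<bar>x / 2\<bar> ^ k * (inverse (fact m) * (\<bar>x / 2\<bar> ^ 2) ^ m)"
      by (simp only: mult_1_right mult_1_left divide_inverse mult_ac)
    finally show ?thesis .
  qed
  show norm_summable: "summable (\<lambda>m. norm (?c m))"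
    using bound by (intro summable_norm_comparison_test[OF _ summable_mult[OF summable_exp]]) blast
  show "?c sums bessel_J_nat k x"
    unfolding bessel_J_nat_def by (rule summable_sums, rule summable_norm_cancel[OF norm_summable])
qed

lemma bessel_J_uminus: "bessel_J (- k) x = (-1) ^ nat \<bar>k\<bar> * bessel_J k x"
  by (auto simp: bessel_J_def)

lemma bessel_J_nat_exp_product_coeff:
  fixes t :: complex
  assumes "t \<noteq> 0"
  shows "((\<lambda>j. (of_real (x / 2) * t) ^ (j + n) / fact (j + n) * ((- of_real (x / 2) / t) ^ j / fact j))
           has_sum of_real (bessel_J_nat n x) * t ^ n) UNIV"
proof -
  define a :: complex where "a = of_real (x / 2)"
  have t_cancels: "a * t * (- a / t) = (-1) * a ^ 2"
    using assms by (simp add: power2_eq_square)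
  have "(a * t) ^ (j + n) / fact (j + n) * ((- a / t) ^ j / fact j)
      = (a * t * (- a / t)) ^ j * (a * t) ^ n / (fact j * fact (j + n))" for j
    by (simp only: power_add power_mult_distrib times_divide_times_eq mult_ac)
  also have "\<dots> j = (-1) ^ j * (a ^ 2) ^ j * a ^ n * t ^ n / (fact j * fact (j + n))" for j
    unfolding t_cancels power_mult_distrib by (simp only: mult.assoc)
  also have "\<dots> j = of_real ((-1) ^ j / (fact j * fact (j + n)) * (x / 2) ^ (2 * j + n)) * t ^ n" for j
    by (simp add: a_def power_mult_distrib power_add power_mult)
  finally show ?thesis
    unfolding a_def by (simp only:) (intro has_sum_cmult_left has_sum_of_real bessel_J_nat_has_sum)
qed

lemma bessel_J_generating_function:
  fixes t :: complex
  assumes "t \<noteq> 0"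
  shows "((\<lambda>k. of_real (bessel_J k x) * t powi k) has_sum exp (of_real (x / 2) * (t - inverse t))) UNIV"
proof -
  define a :: complex where "a = of_real (x / 2)"
  define g where "g = (\<lambda>(p, m). (a * t) ^ p / fact p * ((- a / t) ^ m / fact m))"
  have "(g has_sum exp (a * t) * exp (- a / t)) (UNIV \<times> UNIV)"
    unfolding g_def by (intro has_sum_product_complex exp_has_sum) auto
  also have "exp (a * t) * exp (- a / t) = exp (a * (t - inverse t))"
    by (simp add: exp_add[symmetric] right_diff_distrib divide_inverse)
  finally have g_sum: "(g has_sum exp (a * (t - inverse t))) UNIV"
    by simp
  define \<psi> :: "int \<times> nat \<Rightarrow> nat \<times> nat"
    where "\<psi> = (\<lambda>(k, j). if 0 \<le> k then (j + nat k, j) else (j, j + nat (- k)))"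
  have "bij_betw \<psi> UNIV UNIV"
    by (rule bij_betwI[where g = "\<lambda>(p, m). (int p - int m, min p m)"]) (auto simp: \<psi>_def split: if_splits)
  then have "((\<lambda>kj. g (\<psi> kj)) has_sum exp (a * (t - inverse t))) (UNIV \<times> UNIV)"
    using g_sum by (simp add: has_sum_reindex_bij_betw)
  then show ?thesis
    unfolding a_def
  proof (rule has_sum_Sigma')
    fix k :: int
    show "((\<lambda>j. g (\<psi> (k, j))) has_sum of_real (bessel_J k x) * t powi k) UNIV"
    proof (cases "0 \<le> k")
      case True
      then show ?thesis
        using bessel_J_nat_exp_product_coeff[OF assms, of x "nat k"]
        by (simp add: g_def \<psi>_def a_def bessel_J_def power_int_nonneg_exp)
    next
      case False
      \<comment> \<open>Exchanging the roles of \<open>p\<close> and \<open>m\<close> amounts to replacing \<open>t\<close> by \<open>- 1 / t\<close>.\<close>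
      have "g (\<psi> (k, j)) = (a * (- inverse t)) ^ (j + nat (- k)) / fact (j + nat (- k))
          * ((- a / (- inverse t)) ^ j / fact j)" for j
        using False by (simp add: g_def \<psi>_def divide_inverse mult.commute)
      moreover have "of_real (bessel_J_nat (nat (- k)) x) * (- inverse t) ^ nat (- k)
          = of_real (bessel_J k x) * t powi k"
        using False by (simp add: bessel_J_def power_int_def power_minus[of "inverse t"])
      ultimately show ?thesis
        using bessel_J_nat_exp_product_coeff[of "- inverse t" x "nat (- k)"] assms
        by (simp add: a_def)
    qed
  qed
qed

lemma jacobi_anger: "((\<lambda>k. rcis (bessel_J k x) (of_int k * \<theta>)) has_sum cis (x * sin \<theta>)) UNIV"
proof -
  have "((\<lambda>k. of_real (bessel_J k x) * cis \<theta> powi k)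
          has_sum exp (of_real (x / 2) * (cis \<theta> - inverse (cis \<theta>)))) UNIV"
    by (rule bessel_J_generating_function) simp
  also have "of_real (x / 2) * (cis \<theta> - inverse (cis \<theta>)) = \<i> * of_real (x * sin \<theta>)"
    by (simp add: complex_eq_iff)
  finally show ?thesis
    unfolding rcis_def cis_power_int by (simp add: cis_conv_exp)
qed

definition bessel_prod :: "real ^ 'n \<Rightarrow> int ^ 'n \<Rightarrow> real" where
  "bessel_prod a k = (\<Prod>i\<in>UNIV. bessel_J (k $ i) (a $ i))"

definition int_inner :: "int ^ 'n \<Rightarrow> real ^ 'n \<Rightarrow> real" where
  "int_inner k \<theta> = (\<Sum>i\<in>UNIV. of_int (k $ i) * \<theta> $ i)"

lemma prod_rcis:
  "finite A \<Longrightarrow> (\<Prod>i\<in>A. rcis (r i) (\<phi> i)) = rcis (\<Prod>i\<in>A. r i) (\<Sum>i\<in>A. \<phi> i)"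
  by (induction A rule: finite_induct) (simp_all add: rcis_mult)

lemma jacobi_anger_vec:
  fixes a \<theta> :: "real ^ 'n"
  shows "((\<lambda>k. rcis (bessel_prod a k) (int_inner k \<theta>))
           has_sum cis (\<Sum>i\<in>UNIV. a $ i * sin (\<theta> $ i))) UNIV"
proof -
  have "((\<lambda>k::int ^ 'n. \<Prod>i\<in>UNIV. rcis (bessel_J (k $ i) (a $ i)) (of_int (k $ i) * \<theta> $ i))
          has_sum (\<Prod>i\<in>UNIV. cis (a $ i * sin (\<theta> $ i)))) UNIV"
    by (intro has_sum_prod_vec_complex jacobi_anger) simp
  then show ?thesis
    unfolding bessel_prod_def int_inner_def cis_rcis_eq prod_rcis[OF finite] by simp
qed

lemma jacobi_anger_vec_sin:
  fixes a \<theta> :: "real ^ 'n"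
  shows "((\<lambda>k. bessel_prod a k * sin (int_inner k \<theta> + b))
           has_sum sin ((\<Sum>i\<in>UNIV. a $ i * sin (\<theta> $ i)) + b)) UNIV"
proof -
  have "((\<lambda>k. Im (cis b * rcis (bessel_prod a k) (int_inner k \<theta>)))
          has_sum Im (cis b * cis (\<Sum>i\<in>UNIV. a $ i * sin (\<theta> $ i)))) UNIV"
    by (intro has_sum_Im has_sum_cmult_right jacobi_anger_vec)
  then show ?thesis
    unfolding cis_rcis_eq rcis_mult by (simp add: add.commute)
qed

lemma prod_minus_one_power_nat_abs:
  "finite A \<Longrightarrow> (\<Prod>i\<in>A. (-1 :: 'a :: comm_ring_1) ^ nat \<bar>k i\<bar>) = (-1) ^ nat \<bar>\<Sum>i\<in>A. k i\<bar>"
  by (induction A rule: finite_induct) (auto simp: minus_one_power_iff even_nat_iff)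

lemma bessel_prod_uminus: "bessel_prod a (- k) = (-1) ^ nat \<bar>\<Sum>i\<in>UNIV. k $ i\<bar> * bessel_prod a k"
  by (simp add: bessel_prod_def bessel_J_uminus prod.distrib prod_minus_one_power_nat_abs)

lemma jacobi_anger_vec_sin_complex:
  fixes a \<theta> :: "real ^ 'n"
  shows "((\<lambda>k. - \<i> * of_real (bessel_prod a k) * cis (int_inner k \<theta>)
           * ((cis b - (-1) ^ nat \<bar>\<Sum>j\<in>UNIV. k $ j\<bar> * cis (- b)) / 2))
     has_sum of_real (sin ((\<Sum>i\<in>UNIV. a $ i * sin (\<theta> $ i)) + b))) UNIV"
proof -
  define S where "S = (\<Sum>i\<in>UNIV. a $ i * sin (\<theta> $ i))"
  define F where "F k = rcis (bessel_prod a k) (int_inner k \<theta>)" for k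
  define \<sigma> where "\<sigma> k = (-1 :: complex) ^ nat \<bar>\<Sum>j\<in>UNIV. k $ j\<bar>" for k :: "int ^ 'n"
  have F_sum: "(F has_sum cis S) UNIV"
    unfolding F_def S_def by (rule jacobi_anger_vec)
  have "bij_betw (uminus :: int ^ 'n \<Rightarrow> _) UNIV UNIV"
    by (rule bij_betwI[where g = uminus]) auto
  then have conj_sum: "((\<lambda>k. cnj (F (- k))) has_sum cnj (cis S)) UNIV"
    using F_sum by (simp add: has_sum_reindex_bij_betw)
  have "cnj (F (- k)) = \<sigma> k * F k" for k
    by (simp add: F_def \<sigma>_def rcis_def cis_cnj bessel_prod_uminus int_inner_def sum_negf)
  then have "((\<lambda>k. \<sigma> k * F k) has_sum cis (- S)) UNIV"
    using conj_sum by (simp add: cis_cnj)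
  then have "((\<lambda>k. - \<i> / 2 * (cis b * F k + - cis (- b) * (\<sigma> k * F k)))
      has_sum - \<i> / 2 * (cis b * cis S + - cis (- b) * cis (- S))) UNIV"
    by (intro has_sum_cmult_right has_sum_add F_sum)
  also have "- \<i> / 2 * (cis b * cis S + - cis (- b) * cis (- S)) = of_real (sin (S + b))"
    by (simp add: complex_eq_iff sin_add field_simps)
  finally show ?thesis
    unfolding S_def
    by (rule has_sum_cong[THEN iffD1, rotated]) (simp add: F_def \<sigma>_def rcis_def algebra_simps)
qed

theorem corollary1:
  fixes a \<omega> \<phi> :: "real ^ 'n" and b :: real and h :: "real \<Rightarrow> real"
    and \<alpha> :: "int ^ 'n \<Rightarrow> real" and kw kp :: "int ^ 'n \<Rightarrow> real"
  assumes h_def: "\<And>x. h x = sin ((\<Sum>i\<in>UNIV. a $ i * sin (\<omega> $ i * x + \<phi> $ i)) + b)"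
    and \<alpha>_def: "\<And>k. \<alpha> k = (\<Prod>i\<in>UNIV. bessel_J (k $ i) (a $ i))"
    and kw_def: "\<And>k. kw k = (\<Sum>i\<in>UNIV. of_int (k $ i) * \<omega> $ i)"
    and kp_def: "\<And>k. kp k = (\<Sum>i\<in>UNIV. of_int (k $ i) * \<phi> $ i)"
  shows "\<forall>x::real.
     ((\<lambda>k. \<alpha> k * sin (kp k + b) * cos (kw k * x) + \<alpha> k * cos (kp k + b) * sin (kw k * x))
        has_sum h x) UNIV
   \<and> ((\<lambda>k. (- \<i> * complex_of_real (\<alpha> k) * exp (\<i> * complex_of_real (kp k))
             * ((exp (\<i> * complex_of_real b)
                 - (-1) ^ nat \<bar>\<Sum>j\<in>UNIV. k $ j\<bar> * exp (- \<i> * complex_of_real b)) / 2))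
             * exp (\<i> * complex_of_real (kw k * x)))
        has_sum complex_of_real (h x)) UNIV"
proof (intro allI conjI)
  fix x
  define \<theta> :: "real ^ 'n" where "\<theta> = (\<chi> i. \<omega> $ i * x + \<phi> $ i)"
  have \<alpha>_eq: "\<alpha> k = bessel_prod a k" for k
    by (simp add: \<alpha>_def bessel_prod_def)
  have inner_eq: "int_inner k \<theta> = kp k + kw k * x" for k
    by (simp add: int_inner_def \<theta>_def kp_def kw_def algebra_simps sum.distrib sum_distrib_left)
  have h_eq: "h x = sin ((\<Sum>i\<in>UNIV. a $ i * sin (\<theta> $ i)) + b)"
    by (simp add: h_def \<theta>_def)
  show "((\<lambda>k. \<alpha> k * sin (kp k + b) * cos (kw k * x) + \<alpha> k * cos (kp k + b) * sin (kw k * x))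
      has_sum h x) UNIV"
    using jacobi_anger_vec_sin[of a \<theta> b] unfolding h_eq
    by (rule has_sum_cong[THEN iffD1, rotated])
      (simp add: \<alpha>_eq inner_eq sin_add cos_add algebra_simps)
  show "((\<lambda>k. (- \<i> * complex_of_real (\<alpha> k) * exp (\<i> * complex_of_real (kp k))
        * ((exp (\<i> * complex_of_real b)
            - (-1) ^ nat \<bar>\<Sum>j\<in>UNIV. k $ j\<bar> * exp (- \<i> * complex_of_real b)) / 2))
        * exp (\<i> * complex_of_real (kw k * x)))
      has_sum complex_of_real (h x)) UNIV"
    using jacobi_anger_vec_sin_complex[of a \<theta> b] unfolding h_eq
    by (rule has_sum_cong[THEN iffD1, rotated])
      (simp add: \<alpha>_eq inner_eq cis_conv_exp distrib_left exp_add mult_ac)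
qed

end
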